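(* Let $m,n\in\mathbb N$ with $m\ge 5$, $n\ge 8$, $n>m$, and let $j\in\{1,2\}$. Then $r(K_{1,m-1},T_n^j)\in\{m+n-4,\ m+n-5\}$. Moreover, if $mn$ is even, then $r(K_{1,m-1},T_n^j)=m+n-4$.
   Context: All graphs are finite and simple; a graph "contains" $H$ if it has a subgraph isomorphic to $H$. $K_{1,m-1}$ is the star on $m$ vertices. For graphs $G_1,G_2$, the Ramsey number $r(G_1,G_2)$ is the smallest positive integer $N$ such that for every graph $G$ on $N$ vertices, either $G$ contains a copy of $G_1$ or the complement $\overline G$ contains a copy of $G_2$. For $n\ge 5$, $T_n^1$ is the tree with vertex set $\{v_0,\ldots,v_{n-1}\}$ and edges $v_0v_1,\ldots,v_0v_{n-3},v_{n-4}v_{n-2},v_{n-3}v_{n-1}$, and $T_n^2$ is the tree on the same vertex set with edges $v_0v_1,\ldots,v_0v_{n-3},v_{n-3}v_{n-2},v_{n-3}v_{n-1}$. *)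

theory Defs
  imports Main
begin

definition simple_graph :: "'a set \<Rightarrow> ('a \<Rightarrow> 'a \<Rightarrow> bool) \<Rightarrow> bool" where
  "simple_graph V E \<longleftrightarrow> finite V \<and>
     (\<forall>u\<in>V. \<forall>v\<in>V. E u v \<longrightarrow> E v u) \<and> (\<forall>v\<in>V. \<not> E v v)"

definition compl_graph :: "('a \<Rightarrow> 'a \<Rightarrow> bool) \<Rightarrow> 'a \<Rightarrow> 'a \<Rightarrow> bool" where
  "compl_graph E u v \<longleftrightarrow> u \<noteq> v \<and> \<not> E u v"

definition contains :: "'a set \<Rightarrow> ('a \<Rightarrow> 'a \<Rightarrow> bool) \<Rightarrow> 'b set \<Rightarrow> ('b \<Rightarrow> 'b \<Rightarrow> bool) \<Rightarrow> bool" where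
  "contains V E VH EH \<longleftrightarrow> (\<exists>f. inj_on f VH \<and> f ` VH \<subseteq> V \<and>
      (\<forall>u\<in>VH. \<forall>v\<in>VH. EH u v \<longrightarrow> E (f u) (f v)))"

definition ramsey_number :: "'a set \<Rightarrow> ('a \<Rightarrow> 'a \<Rightarrow> bool) \<Rightarrow> 'b set \<Rightarrow> ('b \<Rightarrow> 'b \<Rightarrow> bool) \<Rightarrow> nat" where
  "ramsey_number V1 E1 V2 E2 = (LEAST N. 0 < N \<and>
      (\<forall>E :: nat \<Rightarrow> nat \<Rightarrow> bool. simple_graph {0..<N} E \<longrightarrow>
         contains {0..<N} E V1 E1 \<or> contains {0..<N} (compl_graph E) V2 E2))"

definition edges_of :: "(nat \<times> nat) set \<Rightarrow> nat \<Rightarrow> nat \<Rightarrow> bool" where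
  "edges_of S u v \<longleftrightarrow> (u, v) \<in> S \<or> (v, u) \<in> S"

definition star_edges :: "nat \<Rightarrow> nat \<Rightarrow> nat \<Rightarrow> bool" where
  "star_edges m = edges_of {(0, i) | i. 1 \<le> i \<and> i \<le> m - 1}"

definition T1_edges :: "nat \<Rightarrow> nat \<Rightarrow> nat \<Rightarrow> bool" where
  "T1_edges n = edges_of ({(0, i) | i. 1 \<le> i \<and> i \<le> n - 3} \<union>
      {(n - 4, n - 2), (n - 3, n - 1)})"

definition T2_edges :: "nat \<Rightarrow> nat \<Rightarrow> nat \<Rightarrow> bool" where
  "T2_edges n = edges_of ({(0, i) | i. 1 \<le> i \<and> i \<le> n - 3} \<union>
      {(n - 3, n - 2), (n - 3, n - 1)})"

definition T_edges :: "nat \<Rightarrow> nat \<Rightarrow> nat \<Rightarrow> nat \<Rightarrow> bool" where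
  "T_edges j n = (if j = 1 then T1_edges n else T2_edges n)"

end

theory Submission
  imports Defs
begin

(* Upper bound r <= m+n-4.  A graph on m+n-4 vertices without K_{1,m-1} has maximum degree at most
   m-2, so its complement has minimum degree at least n-3.  The core result (locale dense_graph,
   theorem contains_T) is that every graph on m+n-4 vertices of minimum degree >= n-3 contains both
   trees.  Take a vertex u of maximum degree.  If deg u >= n-1 the trees are grown around u
   directly; otherwise (locale sparse_hub) we count, for each vertex r outside the closed
   neighbourhood of u, the neighbours r shares with u, and find the two pendant edges there.

   Lower bound r > N.  An (m-2)-regular circulant graph on N = m+n-5 (mn even) or N = m+n-6
   (mn odd) vertices contains no K_{1,m-1}, and its complement has maximum degree < n-3, whereas
   the centre of either tree has degree n-3. *)

lemma simple_graph_finite: "simple_graph V E \<Longrightarrow> finite V"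
  unfolding simple_graph_def by blast

lemma simple_graph_sym: "simple_graph V E \<Longrightarrow> u \<in> V \<Longrightarrow> v \<in> V \<Longrightarrow> E u v \<Longrightarrow> E v u"
  unfolding simple_graph_def by blast

lemma simple_graph_irrefl: "simple_graph V E \<Longrightarrow> v \<in> V \<Longrightarrow> \<not> E v v"
  unfolding simple_graph_def by blast

definition nbhd :: "'a set \<Rightarrow> ('a \<Rightarrow> 'a \<Rightarrow> bool) \<Rightarrow> 'a \<Rightarrow> 'a set" where
  "nbhd V E u = {v \<in> V. E u v}"

lemma in_nbhd_iff: "v \<in> nbhd V E u \<longleftrightarrow> v \<in> V \<and> E u v"
  by (simp add: nbhd_def)

lemma nbhd_subset: "nbhd V E u \<subseteq> V"
  by (auto simp: nbhd_def)

lemma finite_nbhd: "simple_graph V E \<Longrightarrow> finite (nbhd V E u)"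
  using nbhd_subset simple_graph_finite finite_subset by metis

lemma nbhd_sym: "simple_graph V E \<Longrightarrow> u \<in> V \<Longrightarrow> v \<in> nbhd V E u \<Longrightarrow> u \<in> nbhd V E v"
  by (simp add: in_nbhd_iff simple_graph_sym)

lemma not_in_own_nbhd: "simple_graph V E \<Longrightarrow> u \<notin> nbhd V E u"
  by (simp add: in_nbhd_iff simple_graph_irrefl)

lemma simple_graph_compl: "simple_graph V E \<Longrightarrow> simple_graph V (compl_graph E)"
  unfolding simple_graph_def compl_graph_def by blast

lemma card_nbhd_compl:
  assumes G: "simple_graph V E" and u: "u \<in> V"
  shows "card (nbhd V (compl_graph E) u) = card V - 1 - card (nbhd V E u)"
proof -
  have closed: "insert u (nbhd V E u) \<subseteq> V" using u nbhd_subset[of V E u] by blast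
  have "nbhd V (compl_graph E) u = V - insert u (nbhd V E u)"
    unfolding nbhd_def compl_graph_def by blast
  moreover have "card (insert u (nbhd V E u)) = card (nbhd V E u) + 1"
    using finite_nbhd[OF G] not_in_own_nbhd[OF G] by simp
  moreover have "finite V" using G by (rule simple_graph_finite)
  ultimately show ?thesis
    using closed card_Diff_subset[of "insert u (nbhd V E u)" V] finite_nbhd[OF G] by simp
qed

lemma contains_mono_host:
  assumes "contains V E VH EH" "V \<subseteq> V'"
  shows "contains V' E VH EH"
proof -
  obtain f where "inj_on f VH" "f ` VH \<subseteq> V" "\<forall>a\<in>VH. \<forall>b\<in>VH. EH a b \<longrightarrow> E (f a) (f b)"
    using assms(1) unfolding contains_def by blast
  moreover have "f ` VH \<subseteq> V'" using calculation(2) assms(2) by (rule subset_trans)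
  ultimately show ?thesis unfolding contains_def by blast
qed

lemma contains_imp_degree:
  assumes emb: "contains V E VH EH" and fin: "finite V"
    and c: "c \<in> VH" and D: "D \<subseteq> VH" and edges: "\<And>x. x \<in> D \<Longrightarrow> EH c x"
  shows "\<exists>v\<in>V. card D \<le> card (nbhd V E v)"
proof -
  obtain f where f: "inj_on f VH" "f ` VH \<subseteq> V" "\<forall>a\<in>VH. \<forall>b\<in>VH. EH a b \<longrightarrow> E (f a) (f b)"
    using emb unfolding contains_def by blast
  have "f x \<in> nbhd V E (f c)" if "x \<in> D" for x
  proof -
    have "x \<in> VH" using that D by blast
    thus ?thesis using f(2,3) c edges[OF that] unfolding in_nbhd_iff by blast
  qed
  hence "f ` D \<subseteq> nbhd V E (f c)" by blast
  hence "card (f ` D) \<le> card (nbhd V E (f c))"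
    by (rule card_mono[OF finite_subset[OF nbhd_subset fin]])
  moreover have "card (f ` D) = card D" using inj_on_subset[OF f(1) D] by (rule card_image)
  ultimately have "card D \<le> card (nbhd V E (f c))" by simp
  moreover have "f c \<in> V" using f(2) c by blast
  ultimately show ?thesis by blast
qed

(* H lives on {0..<n}: index 0 and the indices above k form a "spine",
   sent to u # ws, while the indices 1..k are leaves of 0, sent bijectively to a set L of
   neighbours of u off the spine. *)
lemma contains_by_leaves:
  assumes G: "simple_graph V E"
    and spine: "u \<in> V" "set ws \<subseteq> V" "distinct (u # ws)"
    and leaves: "L \<subseteq> nbhd V E u" "finite L" "card L = k" "L \<inter> set ws = {}"
    and n: "n = Suc k + length ws"
    and edges: "\<And>a b. (a, b) \<in> S \<Longrightarrow> a < n \<Longrightarrow> b < n \<Longrightarrow> (a = 0 \<and> b \<in> {1..k}) \<or>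
       (a \<notin> {1..k} \<and> b \<notin> {1..k} \<and> E ((u # ws) ! (a - k)) ((u # ws) ! (b - k)))"
  shows "contains V E {0..<n} (edges_of S)"
proof -
  obtain g where g: "bij_betw g {1..k} L" using ex_bij_betw_nat_finite_1[OF leaves(2)] leaves(3) by auto
  define f where "f i = (if i \<in> {1..k} then g i else (u # ws) ! (i - k))" for i
  have f_leaf: "f i = g i" if "i \<in> {1..k}" for i using that unfolding f_def by (rule if_P)
  have f_spine: "f i = (u # ws) ! (i - k)" if "i \<notin> {1..k}" for i
    using that unfolding f_def by (rule if_not_P)
  have u_not_leaf: "u \<notin> L" using leaves(1) not_in_own_nbhd[OF G] by blast
  have leaf: "f i \<in> L" if "i \<in> {1..k}" for i
    using g that f_leaf[OF that] by (auto simp: bij_betw_def)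
  have spine_index: "i - k < length (u # ws)" if "i \<notin> {1..k}" "i < n" for i
    using that n by auto
  have spine_val: "f i \<in> set (u # ws)" if "i \<notin> {1..k}" "i < n" for i
    unfolding f_spine[OF that(1)] by (rule nth_mem[OF spine_index[OF that]])
  have disjoint: "L \<inter> set (u # ws) = {}" using u_not_leaf leaves(4) by auto
  have inj: "inj_on f {0..<n}"
  proof (rule inj_onI)
    fix i i' assume i: "i \<in> {0..<n}" and i': "i' \<in> {0..<n}" and eq: "f i = f i'"
    consider "i \<in> {1..k}" "i' \<in> {1..k}" | "i \<notin> {1..k}" "i' \<notin> {1..k}"
      | "i \<in> {1..k}" "i' \<notin> {1..k}" | "i \<notin> {1..k}" "i' \<in> {1..k}" by blast
    then show "i = i'"
    proof cases
      case 1
      have "g i = g i'" using eq unfolding f_leaf[OF 1(1)] f_leaf[OF 1(2)] .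
      thus ?thesis using inj_onD[OF bij_betw_imp_inj_on[OF g]] 1 by blast
    next
      case 2
      have "(u # ws) ! (i - k) = (u # ws) ! (i' - k)"
        using eq unfolding f_spine[OF 2(1)] f_spine[OF 2(2)] .
      moreover have "i - k < length (u # ws)" "i' - k < length (u # ws)"
        using spine_index 2 i i' by auto
      ultimately have "i - k = i' - k" using nth_eq_iff_index_eq[OF spine(3)] by blast
      thus ?thesis using 2 by auto
    next
      case 3
      hence "f i \<in> L" "f i' \<in> set (u # ws)" using leaf spine_val i' by auto
      thus ?thesis using eq disjoint by auto
    next
      case 4
      hence "f i' \<in> L" "f i \<in> set (u # ws)" using leaf spine_val i by auto
      thus ?thesis using eq disjoint by auto
    qed
  qed
  have range: "L \<union> set (u # ws) \<subseteq> V" using leaves(1) nbhd_subset[of V E u] spine(1,2) by auto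
  have into_V: "f ` {0..<n} \<subseteq> V"
  proof
    fix x assume "x \<in> f ` {0..<n}"
    then obtain i where i: "i < n" "x = f i" by auto
    have "f i \<in> L \<union> set (u # ws)" using leaf spine_val[OF _ i(1)] by blast
    thus "x \<in> V" using i(2) range by blast
  qed
  have arc: "E (f a) (f b)" if "(a, b) \<in> S" "a < n" "b < n" for a b
    using edges[OF that]
  proof
    assume ab: "a = 0 \<and> b \<in> {1..k}"
    hence "f a = u" using f_spine[of 0] by simp
    moreover have "f b \<in> nbhd V E u" using ab leaf leaves(1) by blast
    ultimately show ?thesis by (simp add: in_nbhd_iff)
  next
    assume "a \<notin> {1..k} \<and> b \<notin> {1..k} \<and> E ((u # ws) ! (a - k)) ((u # ws) ! (b - k))"
    thus ?thesis using f_spine by simp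
  qed
  have "E (f a) (f b)" if "edges_of S a b" "a < n" "b < n" for a b
  proof -
    have "f a \<in> V" "f b \<in> V" using into_V that(2,3) by auto
    thus ?thesis using that arc[of a b] arc[of b a] simple_graph_sym[OF G]
      unfolding edges_of_def by blast
  qed
  thus ?thesis unfolding contains_def using inj into_V by auto
qed

lemma contains_star_iff:
  assumes G: "simple_graph V E" and m: "1 \<le> m"
  shows "contains V E {0..<m} (star_edges m) \<longleftrightarrow> (\<exists>u\<in>V. m - 1 \<le> card (nbhd V E u))"
proof
  assume star: "contains V E {0..<m} (star_edges m)"
  have "star_edges m 0 x" if "x \<in> {1..m - 1}" for x
    using that by (auto simp: star_edges_def edges_of_def)
  hence "\<exists>u\<in>V. card {1..m - 1} \<le> card (nbhd V E u)"
    using m by (intro contains_imp_degree[OF star simple_graph_finite[OF G]]) auto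
  thus "\<exists>u\<in>V. m - 1 \<le> card (nbhd V E u)" by simp
next
  assume "\<exists>u\<in>V. m - 1 \<le> card (nbhd V E u)"
  then obtain u L where u: "u \<in> V" and L: "L \<subseteq> nbhd V E u" "card L = m - 1" "finite L"
    by (meson obtain_subset_with_card_n)
  show "contains V E {0..<m} (star_edges m)" unfolding star_edges_def
  proof (rule contains_by_leaves[OF G u _ _ L(1,3,2), where ws = "[]"])
    show "m = Suc (m - 1) + length []" using m by simp
  qed auto
qed

lemma T_edges_centre: "1 \<le> i \<Longrightarrow> i \<le> n - 3 \<Longrightarrow> T_edges j n 0 i"
  by (auto simp: T_edges_def T1_edges_def T2_edges_def edges_of_def)

lemma contains_T_imp_degree:
  assumes "contains V E {0..<n} (T_edges j n)" "finite V" "1 \<le> n"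
  shows "\<exists>u\<in>V. n - 3 \<le> card (nbhd V E u)"
proof -
  have "\<exists>u\<in>V. card {1..n - 3} \<le> card (nbhd V E u)"
    using assms(3) T_edges_centre by (intro contains_imp_degree[OF assms(1,2)]) auto
  thus ?thesis by simp
qed

lemma contains_T2_fork:
  assumes G: "simple_graph V E" and n: "5 \<le> n"
    and c: "c \<in> V" and s: "s \<in> nbhd V E c" and y: "y1 \<in> nbhd V E s" "y2 \<in> nbhd V E s"
    and dist: "distinct [c, s, y1, y2]"
    and room: "n - 4 \<le> card (nbhd V E c - {s, y1, y2})"
  shows "contains V E {0..<n} (T2_edges n)"
proof -
  obtain L where L: "L \<subseteq> nbhd V E c - {s, y1, y2}" "card L = n - 4" "finite L"
    using room by (rule obtain_subset_with_card_n)
  obtain k where k: "n = k + 4" using le_Suc_ex[of 4 n] n by (auto simp: add.commute)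
  have arcs: "E c s" "E s y1" "E s y2" using s y by (simp_all add: in_nbhd_iff)
  show ?thesis unfolding T2_edges_def
  proof (rule contains_by_leaves[OF G c _ dist _ L(3,2)])
    show "set [s, y1, y2] \<subseteq> V" using s y by (simp add: in_nbhd_iff)
    show "L \<subseteq> nbhd V E c" "L \<inter> set [s, y1, y2] = {}" using L(1) by auto
    show "n = Suc (n - 4) + length [s, y1, y2]" using n by simp
  next
    fix a b assume "(a, b) \<in> {(0, i) |i. 1 \<le> i \<and> i \<le> n - 3} \<union> {(n - 3, n - 2), (n - 3, n - 1)}"
    then consider "a = 0" "b \<in> {1..n - 4}" | "a = 0" "b = n - 3" | "a = n - 3" "b = n - 2"
      | "a = n - 3" "b = n - 1"
      by fastforce
    then show "(a = 0 \<and> b \<in> {1..n - 4}) \<or> (a \<notin> {1..n - 4} \<and> b \<notin> {1..n - 4} \<and>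
        E ([c, s, y1, y2] ! (a - (n - 4))) ([c, s, y1, y2] ! (b - (n - 4))))"
      using k by cases (simp_all add: arcs)
  qed
qed

lemma contains_T1_forks:
  assumes G: "simple_graph V E" and n: "5 \<le> n"
    and c: "c \<in> V" and s: "s1 \<in> nbhd V E c" "s2 \<in> nbhd V E c"
    and y: "y1 \<in> nbhd V E s1" "y2 \<in> nbhd V E s2"
    and dist: "distinct [c, s1, s2, y1, y2]"
    and room: "n - 5 \<le> card (nbhd V E c - {s1, s2, y1, y2})"
  shows "contains V E {0..<n} (T1_edges n)"
proof -
  obtain L where L: "L \<subseteq> nbhd V E c - {s1, s2, y1, y2}" "card L = n - 5" "finite L"
    using room by (rule obtain_subset_with_card_n)
  obtain k where k: "n = k + 5" using le_Suc_ex[of 5 n] n by (auto simp: add.commute)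
  have arcs: "E c s1" "E c s2" "E s1 y1" "E s2 y2" using s y by (simp_all add: in_nbhd_iff)
  show ?thesis unfolding T1_edges_def
  proof (rule contains_by_leaves[OF G c _ dist _ L(3,2)])
    show "set [s1, s2, y1, y2] \<subseteq> V" using s y by (simp add: in_nbhd_iff)
    show "L \<subseteq> nbhd V E c" "L \<inter> set [s1, s2, y1, y2] = {}" using L(1) by auto
    show "n = Suc (n - 5) + length [s1, s2, y1, y2]" using n by simp
  next
    fix a b assume "(a, b) \<in> {(0, i) |i. 1 \<le> i \<and> i \<le> n - 3} \<union> {(n - 4, n - 2), (n - 3, n - 1)}"
    then consider "a = 0" "b \<in> {1..n - 5}" | "a = 0" "b = n - 4" | "a = 0" "b = n - 3"
      | "a = n - 4" "b = n - 2" | "a = n - 3" "b = n - 1"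
      by fastforce
    then show "(a = 0 \<and> b \<in> {1..n - 5}) \<or> (a \<notin> {1..n - 5} \<and> b \<notin> {1..n - 5} \<and>
        E ([c, s1, s2, y1, y2] ! (a - (n - 5))) ([c, s1, s2, y1, y2] ! (b - (n - 5))))"
      using k by cases (simp_all add: arcs)
  qed
qed

lemma mod_shift_diff:
  fixes u v N :: nat
  assumes "u < N" "v < N"
  shows "(v + N - u) mod N = (if u \<le> v then v - u else v + N - u)"
proof (cases "u \<le> v")
  case True
  hence "(v + N - u) mod N = (v - u + N) mod N" by (simp add: add.commute)
  also have "\<dots> = v - u" using assms(2) by simp
  finally show ?thesis using True by simp
qed (use assms in simp)

lemma circulant_graph:
  fixes N :: nat and S :: "nat set"
  assumes S: "S \<subseteq> {1..<N}" and S_sym: "\<And>i. i \<in> S \<Longrightarrow> N - i \<in> S"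
  defines "E \<equiv> \<lambda>u v. u < N \<and> v < N \<and> (v + N - u) mod N \<in> S"
  shows "simple_graph {0..<N} E \<and> (\<forall>u\<in>{0..<N}. card (nbhd {0..<N} E u) = card S)"
proof -
  have sym: "E v u" if "E u v" for u v
  proof -
    have u: "u < N" and v: "v < N" and i: "(v + N - u) mod N \<in> S" using that by (auto simp: E_def)
    have "(u + N - v) mod N = N - (v + N - u) mod N"
      using u v i S by (auto simp: mod_shift_diff)
    thus ?thesis using S_sym[OF i] u v by (simp add: E_def)
  qed
  have irrefl: "\<not> E u u" for u using S by (auto simp: E_def)
  have degree: "card (nbhd {0..<N} E u) = card S" if u: "u < N" for u
  proof -
    have "bij_betw (\<lambda>v. (v + N - u) mod N) (nbhd {0..<N} E u) S"
    proof (rule bij_betw_imageI)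
      show "inj_on (\<lambda>v. (v + N - u) mod N) (nbhd {0..<N} E u)"
        by (rule inj_onI) (use u in \<open>auto simp: in_nbhd_iff mod_shift_diff split: if_splits\<close>)
      show "(\<lambda>v. (v + N - u) mod N) ` nbhd {0..<N} E u = S"
      proof
        show "(\<lambda>v. (v + N - u) mod N) ` nbhd {0..<N} E u \<subseteq> S" by (auto simp: in_nbhd_iff E_def)
        show "S \<subseteq> (\<lambda>v. (v + N - u) mod N) ` nbhd {0..<N} E u"
        proof
          fix i assume i: "i \<in> S"
          hence iN: "i < N" using S by auto
          define v where "v = (if u + i < N then u + i else u + i - N)"
          have vN: "v < N" using iN u by (auto simp: v_def)
          have "(v + N - u) mod N = i" using vN u iN by (auto simp: mod_shift_diff v_def)
          thus "i \<in> (\<lambda>v. (v + N - u) mod N) ` nbhd {0..<N} E u"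
            using vN u i by (auto simp: E_def in_nbhd_iff intro!: image_eqI[of _ _ v])
        qed
      qed
    qed
    thus ?thesis by (rule bij_betw_same_card)
  qed
  have "simple_graph {0..<N} E" unfolding simple_graph_def using sym irrefl by blast
  thus ?thesis using degree by simp
qed

(* A d-regular graph on N vertices exists whenever d < N and dN is even: take the circulant graph
   with connection set +-1,...,+-(d div 2), plus N/2 if d is odd. *)
lemma regular_graph_exists:
  fixes N d :: nat
  assumes dN: "d < N" and even: "even (d * N)"
  shows "\<exists>E. simple_graph {0..<N} E \<and> (\<forall>u\<in>{0..<N}. card (nbhd {0..<N} E u) = d)"
proof -
  define k where "k = d div 2"
  define S where "S = {1..k} \<union> {N - k..<N} \<union> (if odd d then {N div 2} else {})"
  have k: "2 * k < N" using dN by (simp add: k_def)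
  have S: "S \<subseteq> {1..<N}" using k dN even by (auto simp: S_def split: if_splits)
  have S_sym: "N - i \<in> S" if "i \<in> S" for i
    using that k even by (auto simp: S_def split: if_splits)
  have pairs: "card ({1..k} \<union> {N - k..<N}) = k + k" using k by (subst card_Un_disjoint) auto
  have "card S = d"
  proof (cases "odd d")
    case True
    hence "even N" using even by simp
    hence "k < N div 2" "N div 2 < N - k" using True dN k_def by (auto elim!: evenE oddE)
    hence "card S = card ({1..k} \<union> {N - k..<N}) + 1" using True by (simp add: S_def card_insert_if)
    moreover have "d = 2 * k + 1" using True k_def by presburger
    ultimately show ?thesis using pairs by linarith
  next
    case False
    moreover have "d = 2 * k" using False k_def by presburger
    ultimately show ?thesis using pairs by (simp add: S_def)
  qed
  thus ?thesis using circulant_graph[OF S S_sym] by blast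
qed

definition arrows :: "nat \<Rightarrow> 'a set \<Rightarrow> ('a \<Rightarrow> 'a \<Rightarrow> bool) \<Rightarrow> 'b set \<Rightarrow> ('b \<Rightarrow> 'b \<Rightarrow> bool) \<Rightarrow> bool" where
  "arrows N V1 E1 V2 E2 \<longleftrightarrow> (\<forall>E :: nat \<Rightarrow> nat \<Rightarrow> bool. simple_graph {0..<N} E \<longrightarrow>
      contains {0..<N} E V1 E1 \<or> contains {0..<N} (compl_graph E) V2 E2)"

lemma ramsey_number_arrows: "ramsey_number V1 E1 V2 E2 = (LEAST N. 0 < N \<and> arrows N V1 E1 V2 E2)"
  unfolding ramsey_number_def arrows_def ..

lemma ramsey_number_le:
  "0 < N \<Longrightarrow> arrows N V1 E1 V2 E2 \<Longrightarrow> ramsey_number V1 E1 V2 E2 \<le> N"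
  unfolding ramsey_number_arrows by (rule Least_le) simp

lemma simple_graph_subset: "simple_graph V E \<Longrightarrow> V' \<subseteq> V \<Longrightarrow> simple_graph V' E"
  unfolding simple_graph_def by (meson finite_subset subsetD)

(* ... and it exceeds N0 as soon as one graph on N0 vertices avoids G1 while its complement
   avoids G2 (restriction shows that no N <= N0 has the arrow property). *)
lemma ramsey_number_gt:
  assumes witness: "0 < N" "arrows N V1 E1 V2 E2"
    and G: "simple_graph {0..<N0} E"
    and no_G1: "\<not> contains {0..<N0} E V1 E1"
    and no_G2: "\<not> contains {0..<N0} (compl_graph E) V2 E2"
  shows "N0 < ramsey_number V1 E1 V2 E2"
proof (rule ccontr)
  define r where "r = ramsey_number V1 E1 V2 E2"
  assume "\<not> N0 < ramsey_number V1 E1 V2 E2"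
  hence sub: "{0..<r} \<subseteq> {0..<N0}" by (auto simp: r_def)
  have "0 < r \<and> arrows r V1 E1 V2 E2"
    unfolding r_def ramsey_number_arrows by (rule LeastI[of _ N]) (use witness in simp)
  moreover have "simple_graph {0..<r} E" using G sub by (rule simple_graph_subset)
  ultimately have "contains {0..<r} E V1 E1 \<or> contains {0..<r} (compl_graph E) V2 E2"
    unfolding arrows_def by blast
  thus False using contains_mono_host[OF _ sub, of E V1 E1]
      contains_mono_host[OF _ sub, of "compl_graph E" V2 E2] no_G1 no_G2 by blast
qed

lemma obtain_fresh:
  assumes "finite B" "card B < card A"
  obtains x where "x \<in> A" "x \<notin> B"
  using assms card_mono[OF assms(1)] by (meson leD subsetI)

lemma obtain_two:
  assumes "2 \<le> card A"
  obtains a b where "a \<in> A" "b \<in> A" "a \<noteq> b"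
proof -
  obtain B where "B \<subseteq> A" "card B = 2" using assms by (rule obtain_subset_with_card_n)
  thus ?thesis using that by (auto simp: card_2_iff)
qed

(* Graphs on m+n-4 vertices with minimum degree at least n-3: the complements of graphs without
   K_{1,m-1}.  The main result of this locale is that they contain both trees. *)
locale dense_graph =
  fixes V :: "'a set" and E :: "'a \<Rightarrow> 'a \<Rightarrow> bool" and m n :: nat
  assumes simple: "simple_graph V E"
    and card_V: "card V = m + n - 4"
    and m_ge: "5 \<le> m" and m_less_n: "m < n" and n_ge: "8 \<le> n"
    and min_degree: "\<And>v. v \<in> V \<Longrightarrow> n - 3 \<le> card (nbhd V E v)"
begin

abbreviation nb :: "'a \<Rightarrow> 'a set" where
  "nb \<equiv> nbhd V E"

lemma finite_nb: "finite (nb v)"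
  using simple by (rule finite_nbhd)

lemma nb_in_V: "w \<in> nb v \<Longrightarrow> w \<in> V"
  by (simp add: in_nbhd_iff)

lemma nb_sym: "v \<in> V \<Longrightarrow> w \<in> nb v \<Longrightarrow> v \<in> nb w"
  using simple by (rule nbhd_sym)

lemma not_in_nb: "v \<notin> nb v"
  using simple by (rule not_in_own_nbhd)

(* If some vertex u has degree at least n-1, T_n^2 is grown around u: any neighbour w of u has
   two neighbours other than u, and u still has n-4 neighbours left for the leaves. *)
lemma T2_at_high_degree:
  assumes u: "u \<in> V" and high: "n - 1 \<le> card (nb u)"
  shows "contains V E {0..<n} (T2_edges n)"
proof -
  have "nb u \<noteq> {}" using high n_ge by auto
  then obtain w where w: "w \<in> nb u" by blast
  have deg_w: "n - 3 \<le> card (nb w)" using min_degree nb_in_V[OF w] by blast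
  have "card {u} < card (nb w)" using deg_w n_ge by simp
  then obtain y1 where y1: "y1 \<in> nb w" "y1 \<notin> {u}" by (rule obtain_fresh[rotated]) auto
  have "card {u, y1} \<le> 2" by (simp add: card_insert_if)
  hence "card {u, y1} < card (nb w)" using deg_w n_ge by linarith
  then obtain y2 where y2: "y2 \<in> nb w" "y2 \<notin> {u, y1}" by (rule obtain_fresh[rotated]) auto
  have "card {w, y1, y2} \<le> 3" by (simp add: card_insert_if)
  hence "n - 4 \<le> card (nb u - {w, y1, y2})"
    using high diff_card_le_card_Diff[of "{w, y1, y2}" "nb u"] by simp
  moreover have "distinct [u, w, y1, y2]" using w y1 y2 not_in_nb by auto
  ultimately show ?thesis using contains_T2_fork[OF simple _ u w y1(1) y2(1)] n_ge by simp
qed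

(* Likewise for T_n^1: two neighbours of u get private neighbours, leaving n-5 leaves. *)
lemma T1_at_high_degree:
  assumes u: "u \<in> V" and high: "n - 1 \<le> card (nb u)"
  shows "contains V E {0..<n} (T1_edges n)"
proof -
  have "2 \<le> card (nb u)" using high n_ge by linarith
  then obtain w1 w2 where w: "w1 \<in> nb u" "w2 \<in> nb u" "w1 \<noteq> w2" by (rule obtain_two)
  have deg_w: "n - 3 \<le> card (nb w1)" "n - 3 \<le> card (nb w2)"
    using min_degree nb_in_V w by blast+
  have "card {u, w2} \<le> 2" by (simp add: card_insert_if)
  hence "card {u, w2} < card (nb w1)" using deg_w n_ge by linarith
  then obtain y1 where y1: "y1 \<in> nb w1" "y1 \<notin> {u, w2}" by (rule obtain_fresh[rotated]) auto
  have "card {u, w1, y1} \<le> 3" by (simp add: card_insert_if)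
  hence "card {u, w1, y1} < card (nb w2)" using deg_w n_ge by linarith
  then obtain y2 where y2: "y2 \<in> nb w2" "y2 \<notin> {u, w1, y1}" by (rule obtain_fresh[rotated]) auto
  have "card {w1, w2, y1, y2} \<le> 4" by (simp add: card_insert_if)
  hence "n - 5 \<le> card (nb u - {w1, w2, y1, y2})"
    using high diff_card_le_card_Diff[of "{w1, w2, y1, y2}" "nb u"] by simp
  moreover have "distinct [u, w1, w2, y1, y2]" using w y1 y2 not_in_nb by auto
  ultimately show ?thesis using contains_T1_forks[OF simple _ u w(1,2) y1(1) y2(1)] n_ge by simp
qed

end

(* The remaining case: u is a vertex of maximum degree D <= n-2.  The "far" vertices are those
   outside the closed neighbourhood of u; common r collects the neighbours of u adjacent to r. *)
locale sparse_hub = dense_graph +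
  fixes u :: 'a
  assumes u_in_V: "u \<in> V"
    and u_max: "\<And>v. v \<in> V \<Longrightarrow> card (nb v) \<le> card (nb u)"
    and u_sparse: "card (nb u) \<le> n - 2"
begin

definition far :: "'a set" where
  "far = V - nb u - {u}"

definition common :: "'a \<Rightarrow> 'a set" where
  "common r = nb r \<inter> nb u"

lemma far_iff: "r \<in> far \<longleftrightarrow> r \<in> V \<and> r \<notin> nb u \<and> r \<noteq> u"
  by (auto simp: far_def)

lemma finite_common: "finite (common r)"
  by (simp add: common_def finite_nb)

lemma u_not_in_nb_far: "r \<in> far \<Longrightarrow> u \<notin> nb r"
  using nb_sym u_in_V far_iff by blast

lemma card_far: "card far + card (nb u) + 1 = m + n - 4"
proof -
  have closed: "insert u (nb u) \<subseteq> V" using u_in_V nb_in_V by blast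
  have "far = V - insert u (nb u)" by (auto simp: far_def)
  hence "card far = card V - card (insert u (nb u))"
    using closed finite_nb by (simp add: card_Diff_subset)
  moreover have "card (insert u (nb u)) = card (nb u) + 1" using finite_nb not_in_nb by simp
  moreover have "card (insert u (nb u)) \<le> card V"
    using closed simple_graph_finite[OF simple] by (rule card_mono[rotated])
  ultimately show ?thesis using card_V by linarith
qed

lemma two_le_card_far: "2 \<le> card far"
  using card_far u_sparse m_ge n_ge by linarith

lemma finite_far: "finite far"
  using two_le_card_far by (simp add: card_ge_0_finite)

(* A far vertex r has all its neighbours in common r or among the other far vertices; with the
   minimum degree this gives |common r| >= D-m+3 >= n-m > 0. *)
lemma nb_far_subset:
  assumes r: "r \<in> far"
  shows "nb r \<subseteq> common r \<union> (far - {r})"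
proof
  fix x assume x: "x \<in> nb r"
  have "x \<noteq> u" using x u_not_in_nb_far[OF r] by blast
  moreover have "x \<noteq> r" using x not_in_nb by blast
  moreover have "x \<in> V" using x by (rule nb_in_V)
  ultimately show "x \<in> common r \<union> (far - {r})" using x by (auto simp: common_def far_iff)
qed

lemma card_common:
  assumes r: "r \<in> far"
  shows "n - 3 \<le> card (common r) + (card far - 1)"
proof -
  have "n - 3 \<le> card (nb r)" using min_degree r far_iff by blast
  also have "\<dots> \<le> card (common r \<union> (far - {r}))"
    using nb_far_subset[OF r] finite_far finite_nb by (intro card_mono) (auto simp: common_def)
  also have "\<dots> \<le> card (common r) + card (far - {r})" by (rule card_Un_le)
  also have "card (far - {r}) = card far - 1" using r by (rule card_Diff_singleton)
  finally show ?thesis .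
qed

lemma common_nonempty:
  assumes r: "r \<in> far"
  shows "common r \<noteq> {}"
proof
  assume "common r = {}"
  hence "n - 3 \<le> card far - 1" using card_common[OF r] by simp
  moreover have "n - 3 \<le> card (nb u)" using min_degree u_in_V by blast
  ultimately show False using card_far m_less_n m_ge by linarith
qed

lemma far_not_in_nb_u: "r \<in> far \<Longrightarrow> s \<in> nb u \<Longrightarrow> r \<noteq> s"
  using far_iff by blast

(* A neighbour s of u with two far neighbours gives T_n^2 centred at u, since the far vertices
   do not use up neighbours of u. *)
lemma T2_from_cherry:
  assumes s: "s \<in> nb u" and y: "y1 \<in> nb s" "y2 \<in> nb s" "y1 \<in> far" "y2 \<in> far" "y1 \<noteq> y2"
  shows "contains V E {0..<n} (T2_edges n)"
proof -
  have "nb u - {s, y1, y2} = nb u - {s}" using y(3,4) far_iff by blast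
  hence "card (nb u - {s, y1, y2}) = card (nb u) - 1" using s by (simp add: card_Diff_singleton)
  moreover have "n - 3 \<le> card (nb u)" using min_degree u_in_V by blast
  moreover have "distinct [u, s, y1, y2]"
    using s y not_in_nb far_iff far_not_in_nb_u by auto
  ultimately show ?thesis using contains_T2_fork[OF simple _ u_in_V s y(1,2)] n_ge by simp
qed

definition cherry_free :: bool where
  "cherry_free \<longleftrightarrow> (\<forall>s\<in>nb u. \<forall>y1\<in>nb s \<inter> far. \<forall>y2\<in>nb s \<inter> far. y1 = y2)"

lemma cherry_freeD:
  assumes "cherry_free" "s \<in> nb u" "r \<in> far" "r' \<in> far" "s \<in> nb r" "s \<in> nb r'"
  shows "r = r'"
proof -
  have "r \<in> V" "r' \<in> V" using assms(3,4) by (simp_all add: far_iff)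
  hence "r \<in> nb s \<inter> far" "r' \<in> nb s \<inter> far"
    using nb_sym[of r s] nb_sym[of r' s] assms(3-6) by simp_all
  thus ?thesis using assms(1,2) unfolding cherry_free_def by blast
qed

(* Then the sets common r are pairwise disjoint subsets of nb u, so two of them have total size
   at most D <= n-2, and one has size at most n-5. *)
lemma small_common_exists:
  assumes "cherry_free"
  shows "\<exists>r\<in>far. card (common r) \<le> n - 5"
proof -
  obtain r1 r2 where r: "r1 \<in> far" "r2 \<in> far" "r1 \<noteq> r2"
    using two_le_card_far by (rule obtain_two)
  have "common r1 \<inter> common r2 = {}" using cherry_freeD[OF assms] r by (auto simp: common_def)
  hence "card (common r1) + card (common r2) = card (common r1 \<union> common r2)"
    using finite_nb by (intro card_Un_disjoint[symmetric]) (auto simp: common_def)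
  also have "\<dots> \<le> card (nb u)" using finite_nb by (intro card_mono) (auto simp: common_def)
  finally have sum: "card (common r1) + card (common r2) \<le> n - 2" using u_sparse by linarith
  show ?thesis
  proof (rule ccontr)
    assume "\<not> ?thesis"
    hence "\<not> card (common r1) \<le> n - 5" "\<not> card (common r2) \<le> n - 5" using r(1,2) by blast+
    thus False using sum n_ge by linarith
  qed
qed

lemma closed_nb_shared:
  assumes cf: "cherry_free" and r: "r \<in> far" and s: "s \<in> common r"
  shows "nb s \<inter> insert r (nb r) \<subseteq> insert r (common r - {s})"
proof
  have s_nb: "s \<in> nb r" "s \<in> nb u" using s by (auto simp: common_def)
  fix x assume x: "x \<in> nb s \<inter> insert r (nb r)"
  show "x \<in> insert r (common r - {s})"
  proof (cases "x = r")
    case False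
    hence xr: "x \<in> nb r" "x \<in> nb s" using x by auto
    have "s \<in> nb x" using nb_sym[OF nb_in_V[OF s_nb(2)] xr(2)] .
    hence "x \<notin> far" using cherry_freeD[OF cf s_nb(2) r _ s_nb(1)] False by blast
    moreover have "x \<noteq> u" using xr u_not_in_nb_far[OF r] by blast
    moreover have "x \<noteq> s" using xr not_in_nb by blast
    ultimately show ?thesis using xr nb_in_V by (auto simp: common_def far_iff)
  qed simp
qed

(* A far vertex r with |common r| <= n-5 yields T_n^2 centred at r: taking s in common r, at most
   n-5 neighbours of s lie in the closed neighbourhood of r, so s has two neighbours outside it. *)
lemma T2_from_small_common:
  assumes cf: "cherry_free" and r: "r \<in> far" and small: "card (common r) \<le> n - 5"
  shows "contains V E {0..<n} (T2_edges n)"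
proof -
  have rV: "r \<in> V" using r far_iff by blast
  obtain s where s: "s \<in> common r" using common_nonempty[OF r] by blast
  have s_nb: "s \<in> nb r" "s \<in> nb u" using s by (auto simp: common_def)
  from closed_nb_shared[OF cf r s]
  have "card (nb s \<inter> insert r (nb r)) \<le> card (insert r (common r - {s}))"
    using finite_common by (intro card_mono) auto
  also have "\<dots> \<le> Suc (card (common r - {s}))" using finite_common by (simp add: card_insert_if)
  also have "\<dots> = card (common r)" using finite_common s by (rule card_Suc_Diff1)
  finally have "card (nb s \<inter> insert r (nb r)) \<le> n - 5" using small by linarith
  moreover have "n - 3 \<le> card (nb s)" using min_degree nb_in_V[OF s_nb(2)] by blast
  moreover have "card (nb s - insert r (nb r)) = card (nb s) - card (nb s \<inter> insert r (nb r))"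
    using finite_nb by (intro card_Diff_subset_Int) auto
  ultimately have "2 \<le> card (nb s - insert r (nb r))" using n_ge by linarith
  then obtain y1 y2 where y: "y1 \<in> nb s - insert r (nb r)" "y2 \<in> nb s - insert r (nb r)" "y1 \<noteq> y2"
    by (rule obtain_two)
  have "nb r - {s, y1, y2} = nb r - {s}" using y by blast
  hence "card (nb r - {s, y1, y2}) = card (nb r) - 1" using s_nb by (simp add: card_Diff_singleton)
  moreover have "n - 3 \<le> card (nb r)" using min_degree rV by blast
  ultimately have room: "n - 4 \<le> card (nb r - {s, y1, y2})" by linarith
  have dist: "distinct [r, s, y1, y2]" using y s_nb not_in_nb by auto
  have y_nb: "y1 \<in> nb s" "y2 \<in> nb s" using y by auto
  show ?thesis using contains_T2_fork[OF simple _ rV s_nb(1) y_nb dist room] n_ge by simp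
qed

lemma T2_sparse: "contains V E {0..<n} (T2_edges n)"
proof (cases cherry_free)
  case True
  from small_common_exists[OF True] obtain r where "r \<in> far" "card (common r) \<le> n - 5" ..
  thus ?thesis by (rule T2_from_small_common[OF True])
next
  case False
  then obtain s y1 y2 where "s \<in> nb u" "y1 \<in> nb s" "y2 \<in> nb s" "y1 \<in> far" "y2 \<in> far" "y1 \<noteq> y2"
    unfolding cherry_free_def by blast
  thus ?thesis by (rule T2_from_cherry)
qed

lemma T1_from_matching:
  assumes r: "r1 \<in> far" "r2 \<in> far" "r1 \<noteq> r2"
    and s: "s1 \<in> common r1" "s2 \<in> common r2" "s1 \<noteq> s2"
  shows "contains V E {0..<n} (T1_edges n)"
proof -
  have s_nb: "s1 \<in> nb u" "s2 \<in> nb u" using s by (simp_all add: common_def)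
  have r_nb: "r1 \<in> nb s1" "r2 \<in> nb s2"
    using s r nb_sym[of r1 s1] nb_sym[of r2 s2] by (simp_all add: common_def far_iff)
  have "nb u - {s1, s2, r1, r2} = nb u - {s1, s2}" using r(1,2) by (auto simp: far_iff)
  hence "card (nb u - {s1, s2, r1, r2}) = card (nb u) - 2"
    using s_nb s(3) finite_nb by (simp add: card_Diff_subset)
  moreover have "n - 3 \<le> card (nb u)" using min_degree u_in_V by blast
  ultimately have room: "n - 5 \<le> card (nb u - {s1, s2, r1, r2})" by linarith
  have dist: "distinct [u, s1, s2, r1, r2]"
    using r s(3) s_nb not_in_nb far_not_in_nb_u far_iff by auto
  show ?thesis using contains_T1_forks[OF simple _ u_in_V s_nb r_nb dist room] n_ge by simp
qed

(* Such a matching always exists: otherwise all sets common r coincide with a single {s}, which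
   forces |far| >= n-3, i.e. D <= m-2, while s is adjacent to u and all far vertices, so
   deg s >= n-2 > D, contradicting the maximality of u. *)
lemma matching_exists:
  "\<exists>r1 r2 s1 s2. r1 \<in> far \<and> r2 \<in> far \<and> r1 \<noteq> r2 \<and> s1 \<in> common r1 \<and> s2 \<in> common r2 \<and> s1 \<noteq> s2"
proof (rule ccontr)
  assume no_matching: "\<not> ?thesis"
  obtain r1 r2 where r: "r1 \<in> far" "r2 \<in> far" "r1 \<noteq> r2"
    using two_le_card_far by (rule obtain_two)
  obtain s where s: "s \<in> common r1" using common_nonempty[OF r(1)] by blast
  have only_s: "common r \<subseteq> {s}" if "r \<in> far" "r \<noteq> r1" for r
    using no_matching that r(1) s by blast
  have "card (common r2) \<le> 1" using card_mono[OF _ only_s[OF r(2) r(3)[symmetric]]] by simp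
  hence "n - 3 \<le> card far" using card_common[OF r(2)] two_le_card_far by linarith
  hence low_u: "card (nb u) \<le> m - 2" using card_far by linarith
  have sV: "s \<in> V" using s nb_in_V by (auto simp: common_def)
  have "insert u far \<subseteq> nb s"
  proof
    fix x assume "x \<in> insert u far"
    then consider "x = u" | "x = r1" | "x \<in> far" "x \<noteq> r1" by blast
    thus "x \<in> nb s"
    proof cases
      case 1 thus ?thesis using s nb_sym[OF u_in_V] by (simp add: common_def)
    next
      case 2 thus ?thesis using s r(1) nb_sym[of r1 s] by (simp add: common_def far_iff)
    next
      case 3
      hence "common x = {s}" using only_s common_nonempty by blast
      thus ?thesis using 3 nb_sym[of x s] by (auto simp: common_def far_iff)
    qed
  qed
  hence "card (insert u far) \<le> card (nb s)" using finite_nb by (rule card_mono[rotated])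
  moreover have "card (insert u far) = card far + 1" using finite_far by (simp add: far_iff)
  moreover have "card (nb s) \<le> card (nb u)" using u_max[OF sV] .
  ultimately show False using \<open>n - 3 \<le> card far\<close> low_u m_less_n by linarith
qed

lemma T1_sparse: "contains V E {0..<n} (T1_edges n)"
  using matching_exists T1_from_matching by blast

end

context dense_graph
begin

lemma max_degree_vertex:
  obtains u where "u \<in> V" "\<And>v. v \<in> V \<Longrightarrow> card (nb v) \<le> card (nb u)"
proof -
  have fin: "finite V" using simple by (rule simple_graph_finite)
  have "V \<noteq> {}" using card_V m_ge by auto
  hence "Max ((\<lambda>v. card (nb v)) ` V) \<in> (\<lambda>v. card (nb v)) ` V" using fin by simp
  then obtain u where u: "u \<in> V" "card (nb u) = Max ((\<lambda>v. card (nb v)) ` V)" by auto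
  have "card (nb v) \<le> card (nb u)" if "v \<in> V" for v
    unfolding u(2) using fin that by simp
  with u(1) show thesis by (rule that)
qed

theorem contains_T:
  assumes "j \<in> {1, 2}"
  shows "contains V E {0..<n} (T_edges j n)"
proof -
  obtain u where u: "u \<in> V" "\<And>v. v \<in> V \<Longrightarrow> card (nb v) \<le> card (nb u)"
    by (rule max_degree_vertex) fast
  have "contains V E {0..<n} (T1_edges n) \<and> contains V E {0..<n} (T2_edges n)"
  proof (cases "n - 1 \<le> card (nb u)")
    case True
    show ?thesis using T1_at_high_degree[OF u(1) True] T2_at_high_degree[OF u(1) True] ..
  next
    case False
    interpret hub: sparse_hub V E m n u
      using u False by (intro sparse_hub.intro dense_graph_axioms sparse_hub_axioms.intro) auto
    show ?thesis using hub.T1_sparse hub.T2_sparse ..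
  qed
  thus ?thesis using assms by (auto simp: T_edges_def)
qed

end

lemma arrows_star_T:
  assumes m: "5 \<le> m" and mn: "m < n" and n: "8 \<le> n" and j: "j \<in> {1, 2}"
  shows "arrows (m + n - 4) {0..<m} (star_edges m) {0..<n} (T_edges j n)"
  unfolding arrows_def
proof (intro allI impI)
  fix E :: "nat \<Rightarrow> nat \<Rightarrow> bool"
  let ?V = "{0..<m + n - 4}"
  assume G: "simple_graph ?V E"
  show "contains ?V E {0..<m} (star_edges m) \<or> contains ?V (compl_graph E) {0..<n} (T_edges j n)"
  proof (cases "contains ?V E {0..<m} (star_edges m)")
    case False
    have m1: "1 \<le> m" using m by simp
    from False have low: "\<not> m - 1 \<le> card (nbhd ?V E v)" if "v \<in> ?V" for v
      using that unfolding contains_star_iff[OF G m1] by blast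
    have "dense_graph ?V (compl_graph E) m n"
    proof
      show "simple_graph ?V (compl_graph E)" using G by (rule simple_graph_compl)
      fix v assume v: "v \<in> ?V"
      show "n - 3 \<le> card (nbhd ?V (compl_graph E) v)"
        using card_nbhd_compl[OF G v] low[OF v] m by simp
    qed (use m mn n in auto)
    hence "contains ?V (compl_graph E) {0..<n} (T_edges j n)" using j by (rule dense_graph.contains_T)
    thus ?thesis ..
  qed simp
qed

(* The lower-bound construction: an (m-2)-regular graph on N <= m+n-5 vertices has no K_{1,m-1}
   and its complement, of maximum degree N-1-(m-2) < n-3, contains neither tree. *)
lemma star_T_free_graph:
  assumes m: "2 \<le> m" and n: "4 \<le> n" and N: "m - 2 < N" "N \<le> m + n - 5"
    and parity: "even ((m - 2) * N)"
  obtains E where "simple_graph {0..<N} E" "\<not> contains {0..<N} E {0..<m} (star_edges m)"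
    "\<not> contains {0..<N} (compl_graph E) {0..<n} (T_edges j n)"
proof -
  obtain E where G: "simple_graph {0..<N} E" and reg: "\<forall>v\<in>{0..<N}. card (nbhd {0..<N} E v) = m - 2"
    using regular_graph_exists[OF N(1) parity] by blast
  have m1: "1 \<le> m" using m by simp
  have "\<not> contains {0..<N} E {0..<m} (star_edges m)"
    using reg m unfolding contains_star_iff[OF G m1] by auto
  moreover have "\<not> contains {0..<N} (compl_graph E) {0..<n} (T_edges j n)"
  proof
    assume "contains {0..<N} (compl_graph E) {0..<n} (T_edges j n)"
    hence "\<exists>v\<in>{0..<N}. n - 3 \<le> card (nbhd {0..<N} (compl_graph E) v)"
      using n by (intro contains_T_imp_degree) auto
    then obtain v where v: "v \<in> {0..<N}" and "n - 3 \<le> card (nbhd {0..<N} (compl_graph E) v)" ..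
    thus False using card_nbhd_compl[OF G v] reg N n by simp
  qed
  ultimately show thesis using that G by blast
qed

lemma even_host_size:
  fixes m n :: nat
  assumes "5 \<le> m" "5 \<le> n"
  shows "even ((m - 2) * (if even (m * n) then m + n - 5 else m + n - 6))"
proof (cases "even m")
  case True
  hence "even (m - 2)" using assms(1) by presburger
  thus ?thesis by simp
next
  case False
  show ?thesis
  proof (cases "even n")
    case True
    hence "even (m + n - 5)" using False assms by presburger
    thus ?thesis using True by simp
  next
    case n_odd: False
    hence "even (m + n - 6)" using False assms by presburger
    thus ?thesis using False n_odd by simp
  qed
qed

theorem theorem6p1:
  fixes m n j :: nat
  assumes "m \<ge> 5" and "n \<ge> 8" and "n > m" and "j \<in> {1, 2}"
  shows "ramsey_number {0..<m} (star_edges m) {0..<n} (T_edges j n) \<in> {m + n - 4, m + n - 5}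
     \<and> (even (m * n) \<longrightarrow> ramsey_number {0..<m} (star_edges m) {0..<n} (T_edges j n) = m + n - 4)"
proof -
  let ?r = "ramsey_number {0..<m} (star_edges m) {0..<n} (T_edges j n)"
  have arrow: "arrows (m + n - 4) {0..<m} (star_edges m) {0..<n} (T_edges j n)"
    using assms by (intro arrows_star_T) auto
  have upper: "?r \<le> m + n - 4" using arrow assms by (intro ramsey_number_le) auto
  define N where "N = (if even (m * n) then m + n - 5 else m + n - 6)"
  have parity: "even ((m - 2) * N)" unfolding N_def using assms by (intro even_host_size) auto
  have size: "2 \<le> m" "4 \<le> n" "m - 2 < N" "N \<le> m + n - 5" using assms by (auto simp: N_def)
  obtain E where E: "simple_graph {0..<N} E" "\<not> contains {0..<N} E {0..<m} (star_edges m)"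
      "\<not> contains {0..<N} (compl_graph E) {0..<n} (T_edges j n)"
    using star_T_free_graph[OF size parity] by blast
  have lower: "N < ?r" using assms by (intro ramsey_number_gt[OF _ arrow E]) auto
  show ?thesis using upper lower by (auto simp: N_def split: if_splits)
qed

end
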